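(* Let $r \geq 2$ and $n \geq 1$ be integers, and let $\Gamma$ be an unbalanced signed graph on $n$ vertices that is $\mathcal{K}^-_{r+1}$-free, i.e., $\Gamma$ contains no unbalanced signed complete graph on $r+1$ vertices as a (signed) subgraph. Then the number of edges of $\Gamma$ satisfies $$e(\Gamma) \leq \frac{n(n-1)}{2} - (n - r).$$
   Context: A signed graph $\Gamma=(G,\sigma)$ is a simple graph $G$ (the underlying graph) together with a sign function $\sigma: E(G)\to\{-1,+1\}$. A cycle is positive if it contains an even number of negative edges and negative otherwise; $\Gamma$ is balanced if all its cycles are positive and unbalanced otherwise. $\mathcal{K}^-_{k}$ denotes the set of unbalanced signed complete graphs on $k$ vertices (signed graphs whose underlying graph is $K_k$ and which are unbalanced), and $\Gamma$ is $\mathcal{K}^-_{k}$-free if no subgraph of $\Gamma$, with the inherited signs, belongs to $\mathcal{K}^-_{k}$. $e(\Gamma)$ denotes the number of edges of $\Gamma$. *)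

theory Defs
  imports Complex_Main
begin

definition signed_graph :: "'a set \<Rightarrow> 'a set set \<Rightarrow> ('a set \<Rightarrow> int) \<Rightarrow> bool" where
  "signed_graph V E sigma \<longleftrightarrow> finite V \<and> (\<forall>e\<in>E. e \<subseteq> V \<and> card e = 2)
     \<and> (\<forall>e\<in>E. sigma e = 1 \<or> sigma e = -1)"

definition is_cycle :: "'a set \<Rightarrow> 'a set set \<Rightarrow> 'a list \<Rightarrow> bool" where
  "is_cycle V E vs \<longleftrightarrow> distinct vs \<and> length vs \<ge> 3 \<and> set vs \<subseteq> V
     \<and> (\<forall>i < length vs. {vs ! i, vs ! ((i + 1) mod length vs)} \<in> E)"

definition cycle_edges :: "'a list \<Rightarrow> 'a set set" where
  "cycle_edges vs = {{vs ! i, vs ! ((i + 1) mod length vs)} | i. i < length vs}"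

definition positive_cycle :: "('a set \<Rightarrow> int) \<Rightarrow> 'a list \<Rightarrow> bool" where
  "positive_cycle sigma vs \<longleftrightarrow> even (card {e \<in> cycle_edges vs. sigma e = -1})"

definition balanced :: "'a set \<Rightarrow> 'a set set \<Rightarrow> ('a set \<Rightarrow> int) \<Rightarrow> bool" where
  "balanced V E sigma \<longleftrightarrow> (\<forall>vs. is_cycle V E vs \<longrightarrow> positive_cycle sigma vs)"

definition unbalanced_Kk_free :: "nat \<Rightarrow> 'a set \<Rightarrow> 'a set set \<Rightarrow> ('a set \<Rightarrow> int) \<Rightarrow> bool" where
  "unbalanced_Kk_free k V E sigma \<longleftrightarrow>
     \<not> (\<exists>S \<subseteq> V. card S = k \<and> (\<forall>x\<in>S. \<forall>y\<in>S. x \<noteq> y \<longrightarrow> {x, y} \<in> E)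
          \<and> \<not> balanced S {e \<in> E. e \<subseteq> S} sigma)"

end

theory Submission
  imports Defs
begin

text \<open>Take a shortest closed walk with an odd number of negative edges. Splitting it at a
  repeated vertex or along a chord gives two shorter closed walks, one of which is again negative;
  so it is a chordless cycle. If it is a triangle, a maximal clique \<open>W\<close> through it has at most
  \<open>r\<close> vertices, as otherwise \<open>r + 1\<close> of them span an unbalanced complete graph; every
  vertex outside \<open>W\<close> misses some vertex of \<open>W\<close>, which gives \<open>n - r\<close> distinct non-edges.
  Otherwise the cycle is long, and no vertex can be adjacent to all of it, since by parity one
  of the triangles it would span is negative. Together with the missing chords at two
  consecutive cycle vertices this gives \<open>n - 2 \<ge> n - r\<close> distinct non-edges.\<close>

section \<open>Walks and their negative edges\<close>

fun num_neg :: "('a set \<Rightarrow> int) \<Rightarrow> 'a list \<Rightarrow> nat" where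
  "num_neg s (x # y # zs) = (if s {x, y} = -1 then 1 else 0) + num_neg s (y # zs)"
| "num_neg s _ = 0"

fun is_walk :: "'a set set \<Rightarrow> 'a list \<Rightarrow> bool" where
  "is_walk E (x # y # zs) \<longleftrightarrow> {x, y} \<in> E \<and> is_walk E (y # zs)"
| "is_walk E _ \<longleftrightarrow> True"

lemma num_neg_append: "num_neg s (xs @ y # ys) = num_neg s (xs @ [y]) + num_neg s (y # ys)"
  by (induction xs rule: induct_list012) auto

lemma num_neg_snoc: "xs \<noteq> [] \<Longrightarrow> num_neg s (xs @ [y]) = num_neg s xs + num_neg s [last xs, y]"
  by (induction xs rule: induct_list012) auto

lemma is_walk_append: "is_walk E (xs @ y # ys) \<longleftrightarrow> is_walk E (xs @ [y]) \<and> is_walk E (y # ys)"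
  by (induction xs rule: induct_list012) auto

lemma num_neg_conv_sum:
  "num_neg s p = (\<Sum>i < length p - 1. if s {p ! i, p ! Suc i} = -1 then 1 else 0)"
proof (induction s p rule: num_neg.induct)
  case (1 s x y zs)
  then show ?case by (simp add: sum.lessThan_Suc_shift del: sum.lessThan_Suc)
qed auto

lemma is_walk_iff_nth: "is_walk E p \<longleftrightarrow> (\<forall>i. Suc i < length p \<longrightarrow> {p ! i, p ! Suc i} \<in> E)"
proof (induction E p rule: is_walk.induct)
  case (1 E x y zs)
  have "(\<forall>i. Suc i < length (x # y # zs) \<longrightarrow> {(x # y # zs) ! i, (x # y # zs) ! Suc i} \<in> E)
      \<longleftrightarrow> (\<forall>i < Suc (length (y # zs) - 1). {(x # y # zs) ! i, (x # y # zs) ! Suc i} \<in> E)"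
    by auto
  also have "\<dots> \<longleftrightarrow> {x, y} \<in> E \<and> (\<forall>i < length (y # zs) - 1. {(y # zs) ! i, (y # zs) ! Suc i} \<in> E)"
    unfolding All_less_Suc2 by simp
  finally show ?case using 1 by auto
qed auto

lemma nth_append_hd_Suc:
  assumes "i < length vs"
  shows "(vs @ [hd vs]) ! Suc i = vs ! (Suc i mod length vs)"
proof (cases "Suc i < length vs")
  case False
  with assms have "Suc i = length vs" by simp
  then show ?thesis by (cases vs) (auto simp: nth_append)
qed (simp add: nth_append)

lemma is_walk_closed_iff:
  assumes "vs \<noteq> []"
  shows "is_walk E (vs @ [hd vs]) \<longleftrightarrow> (\<forall>i < length vs. {vs ! i, vs ! ((i + 1) mod length vs)} \<in> E)"
  unfolding is_walk_iff_nth by (auto simp: nth_append_hd_Suc nth_append_left)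

lemma inj_on_cycle_edge:
  assumes "distinct vs" "3 \<le> length vs"
  shows "inj_on (\<lambda>i. {vs ! i, vs ! ((i + 1) mod length vs)}) {..<length vs}"
proof (rule inj_onI)
  let ?k = "length vs"
  fix i j assume "i \<in> {..<?k}" "j \<in> {..<?k}"
    and eq: "{vs ! i, vs ! ((i + 1) mod ?k)} = {vs ! j, vs ! ((j + 1) mod ?k)}"
  then have ij: "i < ?k" "j < ?k" by auto
  have "0 < ?k" using assms(2) by linarith
  then have succ: "(i + 1) mod ?k < ?k" "(j + 1) mod ?k < ?k"
    by (rule mod_less_divisor)+
  have nth_eq: "vs ! a = vs ! b \<longleftrightarrow> a = b" if "a < ?k" "b < ?k" for a b
    using assms(1) that nth_eq_iff_index_eq by blast
  show "i = j"
  proof (rule ccontr)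
    assume "i \<noteq> j"
    with eq ij succ nth_eq have "i = (j + 1) mod ?k" "(i + 1) mod ?k = j"
      by (auto simp: doubleton_eq_iff)
    then have "i = (i + 2) mod ?k" by (metis Suc_eq_plus1 add_2_eq_Suc' mod_Suc_eq)
    moreover have "(i + 2) mod ?k \<noteq> i"
    proof (cases "i + 2 < ?k")
      case False
      then have "(i + 2) mod ?k = i + 2 - ?k"
        using ij assms(2) by (simp add: le_mod_geq)
      then show ?thesis using False assms(2) by linarith
    qed simp
    ultimately show False by simp
  qed
qed

lemma card_neg_cycle_edges:
  assumes "distinct vs" "3 \<le> length vs"
  shows "card {e \<in> cycle_edges vs. s e = -1} = num_neg s (vs @ [hd vs])"
proof -
  let ?k = "length vs"
  let ?edge = "\<lambda>i. {vs ! i, vs ! ((i + 1) mod ?k)}"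
  let ?I = "{i \<in> {..<?k}. s (?edge i) = -1}"
  have "{e \<in> cycle_edges vs. s e = -1} = ?edge ` ?I"
    unfolding cycle_edges_def by auto
  moreover have "inj_on ?edge ?I"
    by (rule inj_on_subset[OF inj_on_cycle_edge[OF assms]]) auto
  ultimately have "card {e \<in> cycle_edges vs. s e = -1} = card ?I"
    by (simp add: card_image)
  also have "\<dots> = (\<Sum>i < ?k. if s (?edge i) = -1 then 1 else 0)"
    by (simp add: sum.inter_filter[symmetric])
  also have "\<dots> = num_neg s (vs @ [hd vs])"
    unfolding num_neg_conv_sum by (intro sum.cong) (auto simp: nth_append_hd_Suc nth_append_left)
  finally show ?thesis .
qed

section \<open>Negative closed walks\<close>

definition negative_closed_walk :: "'a set \<Rightarrow> 'a set set \<Rightarrow> ('a set \<Rightarrow> int) \<Rightarrow> 'a list \<Rightarrow> bool" where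
  "negative_closed_walk V E s w \<longleftrightarrow>
     w \<noteq> [] \<and> hd w = last w \<and> set w \<subseteq> V \<and> is_walk E w \<and> odd (num_neg s w)"

lemma negative_closed_walk_of_cycle:
  assumes "is_cycle V E vs" "\<not> positive_cycle s vs"
  shows "negative_closed_walk V E s (vs @ [hd vs])"
proof -
  have "vs \<noteq> []" and cyc: "distinct vs" "3 \<le> length vs"
    using assms(1) unfolding is_cycle_def by auto
  then have "is_walk E (vs @ [hd vs])"
    using assms(1) is_walk_closed_iff unfolding is_cycle_def by blast
  moreover have "odd (num_neg s (vs @ [hd vs]))"
    using assms(2) card_neg_cycle_edges[OF cyc] unfolding positive_cycle_def by simp
  ultimately show ?thesis
    using assms(1) \<open>vs \<noteq> []\<close> unfolding negative_closed_walk_def is_cycle_def by auto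
qed

lemma ex_shorter_negative_closed_walk_repeat:
  assumes "negative_closed_walk V E s (P @ [a] @ M @ [a] @ Q)" "Q \<noteq> []"
  shows "\<exists>w'. negative_closed_walk V E s w' \<and> length w' < length (P @ [a] @ M @ [a] @ Q)"
proof -
  let ?w = "P @ [a] @ M @ [a] @ Q" and ?loop = "a # M @ [a]" and ?rest = "P @ a # Q"
  have "num_neg s ?w = num_neg s (P @ [a]) + num_neg s ?loop + num_neg s (a # Q)"
    using num_neg_append[of s P a "M @ a # Q"] num_neg_append[of s "a # M" a Q] by simp
  moreover have "num_neg s ?rest = num_neg s (P @ [a]) + num_neg s (a # Q)"
    by (rule num_neg_append)
  ultimately have "odd (num_neg s ?loop) \<or> odd (num_neg s ?rest)"
    using assms(1) unfolding negative_closed_walk_def by auto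
  moreover have "is_walk E ?w \<longleftrightarrow> is_walk E (P @ [a]) \<and> is_walk E ?loop \<and> is_walk E (a # Q)"
    using is_walk_append[of E P a "M @ a # Q"] is_walk_append[of E "a # M" a Q] by simp
  moreover have "hd ?rest = hd ?w" "last ?rest = last ?w"
    using assms(2) by (cases P; simp)+
  ultimately have "negative_closed_walk V E s ?loop \<or> negative_closed_walk V E s ?rest"
    using assms(1) is_walk_append[of E P a Q] unfolding negative_closed_walk_def by auto
  moreover have "length ?loop < length ?w" "length ?rest < length ?w"
    using assms(2) by simp_all
  ultimately show ?thesis by blast
qed

lemma ex_shorter_negative_closed_walk_chord:
  assumes "negative_closed_walk V E s (P @ [a] @ M @ [b] @ Q)" "{a, b} \<in> E"
    and "M \<noteq> []" "2 \<le> length P + length Q"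
  shows "\<exists>w'. negative_closed_walk V E s w' \<and> length w' < length (P @ [a] @ M @ [b] @ Q)"
proof -
  let ?w = "P @ [a] @ M @ [b] @ Q" and ?loop = "a # M @ [b, a]" and ?rest = "P @ a # b # Q"
  have ab: "{b, a} = {a, b}" by (rule insert_commute)
  have "num_neg s ?w = num_neg s (P @ [a]) + num_neg s (a # M @ [b]) + num_neg s (b # Q)"
    using num_neg_append[of s P a "M @ b # Q"] num_neg_append[of s "a # M" b Q] by simp
  moreover have "num_neg s ?loop = num_neg s (a # M @ [b]) + num_neg s [a, b]"
    using num_neg_append[of s "a # M" b "[a]"] ab by simp
  moreover have "num_neg s ?rest = num_neg s (P @ [a]) + num_neg s [a, b] + num_neg s (b # Q)"
    using num_neg_append[of s P a "b # Q"] by simp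
  ultimately have "odd (num_neg s ?loop) \<or> odd (num_neg s ?rest)"
    using assms(1) unfolding negative_closed_walk_def by auto
  moreover have "is_walk E ?w \<longleftrightarrow> is_walk E (P @ [a]) \<and> is_walk E (a # M @ [b]) \<and> is_walk E (b # Q)"
    using is_walk_append[of E P a "M @ b # Q"] is_walk_append[of E "a # M" b Q] by simp
  moreover have "is_walk E ?loop \<longleftrightarrow> is_walk E (a # M @ [b])"
    using is_walk_append[of E "a # M" b "[a]"] assms(2) ab by simp
  moreover have "is_walk E ?rest \<longleftrightarrow> is_walk E (P @ [a]) \<and> is_walk E (b # Q)"
    using is_walk_append[of E P a "b # Q"] assms(2) by simp
  moreover have "hd ?rest = hd ?w" by (cases P) simp_all
  moreover have "last ?rest = last ?w" by (cases Q) simp_all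
  ultimately have "negative_closed_walk V E s ?loop \<or> negative_closed_walk V E s ?rest"
    using assms(1) unfolding negative_closed_walk_def by auto
  moreover have "length ?loop < length ?w" "length ?rest < length ?w"
    using assms(3,4) by simp_all
  ultimately show ?thesis by blast
qed

text \<open>Going around the closed walk \<open>u p u\<close> adds up, modulo 2, the triangles
  \<open>u p\<^sub>i p\<^sub>i\<^sub>+\<^sub>1 u\<close>: each spoke \<open>{u, p\<^sub>i}\<close> is counted twice.\<close>

lemma odd_num_neg_triangle_in_fan:
  assumes "odd (num_neg s (u # p @ [u]))" "2 \<le> length p"
  shows "\<exists>i. Suc i < length p \<and> odd (num_neg s [u, p ! i, p ! Suc i, u])"
  using assms
proof (induction p rule: induct_list012)
  case (3 x y zs)
  show ?case
  proof (cases "odd (num_neg s [u, x, y, u])")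
    case True
    then show ?thesis by (intro exI[of _ 0]) simp
  next
    case False
    have yu: "{y, u} = {u, y}"
      by blast
    have "num_neg s (u # x # y # zs @ [u]) = num_neg s [u, x, y] + num_neg s (y # zs @ [u])"
      "num_neg s (u # y # zs @ [u]) = num_neg s [u, y] + num_neg s (y # zs @ [u])"
      "num_neg s [u, x, y, u] = num_neg s [u, x, y] + num_neg s [u, y]"
      by (simp_all add: yu)
    moreover have "odd (num_neg s (u # x # y # zs @ [u]))"
      using "3.prems"(1) by simp
    ultimately have odd_rest: "odd (num_neg s (u # y # zs @ [u]))"
      using False by presburger
    have "zs \<noteq> []"
    proof
      assume "zs = []"
      with odd_rest have "odd (num_neg s [u, y, u])"
        by simp
      moreover have "num_neg s [u, y, u] = 2 * num_neg s [u, y]"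
        by (simp add: yu)
      ultimately show False
        by simp
    qed
    then have "2 \<le> length (y # zs)"
      by (cases zs) simp_all
    then obtain i where
      "Suc i < length (y # zs)" "odd (num_neg s [u, (y # zs) ! i, (y # zs) ! Suc i, u])"
      using "3.IH"(2) odd_rest by auto
    then show ?thesis by (intro exI[of _ "Suc i"]) simp
  qed
qed simp_all

lemma ex_shorter_negative_closed_walk_hub:
  assumes "negative_closed_walk V E s w" "u \<in> V" "\<forall>x \<in> set w. {u, x} \<in> E" "5 \<le> length w"
  shows "\<exists>w'. negative_closed_walk V E s w' \<and> length w' < length w"
proof -
  obtain x w1 where w: "w = x # w1"
    using assms(4) by (cases w) auto
  have "last w = x"
    using assms(1) w unfolding negative_closed_walk_def by simp
  then have "num_neg s (u # w @ [u]) = num_neg s [u, x] + num_neg s w + num_neg s [x, u]"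
    using num_neg_snoc[of w s u] w by simp
  moreover have "num_neg s [x, u] = num_neg s [u, x]"
    by (simp add: insert_commute)
  ultimately have "odd (num_neg s (u # w @ [u]))"
    using assms(1) unfolding negative_closed_walk_def by simp
  then obtain i where i: "Suc i < length w" "odd (num_neg s [u, w ! i, w ! Suc i, u])"
    using odd_num_neg_triangle_in_fan assms(4) by fastforce
  let ?a = "w ! i" and ?b = "w ! Suc i"
  have "?a \<in> set w" "?b \<in> set w"
    using i(1) by simp_all
  then have "{u, ?a} \<in> E" "{?b, u} \<in> E" "?a \<in> V" "?b \<in> V"
    using assms(1,3) insert_commute[of u ?b "{}"] unfolding negative_closed_walk_def by auto
  moreover have "{?a, ?b} \<in> E"
    using assms(1) i(1) unfolding negative_closed_walk_def is_walk_iff_nth by blast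
  ultimately have "negative_closed_walk V E s [u, ?a, ?b, u]"
    using assms(2) i(2) unfolding negative_closed_walk_def by simp
  then show ?thesis
    using assms(4) by (intro exI[of _ "[u, ?a, ?b, u]"]) simp
qed

lemma negative_closed_walk_length_ge:
  assumes "negative_closed_walk V E s w" "\<forall>e \<in> E. card e = 2"
  shows "4 \<le> length w"
proof (rule ccontr)
  assume "\<not> 4 \<le> length w"
  then have "length w = 0 \<or> length w = 1 \<or> length w = 2 \<or> length w = 3"
    by linarith
  then consider "w = []" | x where "w = [x]" | x y where "w = [x, y]" | x y z where "w = [x, y, z]"
    by (auto simp: length_Suc_conv numeral_eq_Suc)
  then show False
    using assms unfolding negative_closed_walk_def by cases (auto simp: insert_commute)
qed

definition shortest_negative_closed_walk ::
    "'a set \<Rightarrow> 'a set set \<Rightarrow> ('a set \<Rightarrow> int) \<Rightarrow> 'a list \<Rightarrow> bool" where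
  "shortest_negative_closed_walk V E s w \<longleftrightarrow> negative_closed_walk V E s w
     \<and> (\<forall>w'. negative_closed_walk V E s w' \<longrightarrow> length w \<le> length w')"

lemma ex_shortest_negative_closed_walk:
  assumes "negative_closed_walk V E s w"
  shows "\<exists>w. shortest_negative_closed_walk V E s w"
  using ex_has_least_nat[of "negative_closed_walk V E s" w length] assms
  unfolding shortest_negative_closed_walk_def by blast

lemma shortest_negative_closed_walk_not_shorter:
  assumes "shortest_negative_closed_walk V E s w"
  shows "\<nexists>w'. negative_closed_walk V E s w' \<and> length w' < length w"
  using assms unfolding shortest_negative_closed_walk_def by (meson not_less)

lemma shortest_negative_closed_walk_cycle:
  assumes "shortest_negative_closed_walk V E s w"
  obtains vs where "w = vs @ [hd vs]" "distinct vs"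
proof -
  have neg: "negative_closed_walk V E s w"
    using assms unfolding shortest_negative_closed_walk_def by blast
  have "2 \<le> length w"
  proof (rule ccontr)
    assume "\<not> 2 \<le> length w"
    then have "length w = 0 \<or> length w = 1"
      by linarith
    then consider "w = []" | x where "w = [x]"
      by (auto simp: length_Suc_conv)
    then have "num_neg s w = 0"
      by cases simp_all
    with neg show False
      unfolding negative_closed_walk_def by simp
  qed
  then obtain vs z where w: "w = vs @ [z]" "vs \<noteq> []"
    by (cases w rule: rev_cases) (auto simp: Suc_le_eq)
  with neg have w_eq: "w = vs @ [hd vs]"
    unfolding negative_closed_walk_def by simp
  moreover have "distinct vs"
  proof (rule ccontr)
    assume "\<not> distinct vs"
    then obtain P a M Q where "vs = P @ [a] @ M @ [a] @ Q"
      using not_distinct_decomp by blast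
    with w_eq have "w = P @ [a] @ M @ [a] @ (Q @ [hd vs])"
      by simp
    with neg have "\<exists>w'. negative_closed_walk V E s w' \<and> length w' < length w"
      using ex_shorter_negative_closed_walk_repeat[of V E s P a M "Q @ [hd vs]"] by simp
    then show False
      using shortest_negative_closed_walk_not_shorter[OF assms] by blast
  qed
  ultimately show thesis
    using that by blast
qed

lemma split_at_two_nth:
  assumes "i < j" "j < length w"
  shows "w = take i w @ [w ! i] @ drop (Suc i) (take j w) @ [w ! j] @ drop (Suc j) w"
proof -
  have "take j w = take i w @ [w ! i] @ drop (Suc i) (take j w)"
    using id_take_nth_drop[of i "take j w"] assms by (simp add: min_def)
  moreover have "w = take j w @ w ! j # drop (Suc j) w"
    using id_take_nth_drop assms(2) by blast
  ultimately show ?thesis by (metis append.assoc append_Cons append_Nil)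
qed

lemma shortest_negative_closed_walk_no_chord:
  assumes "shortest_negative_closed_walk V E s (vs @ [hd vs])"
    and "Suc i < j" "j < length vs" "2 \<le> i + (length vs - j)"
  shows "{vs ! i, vs ! j} \<notin> E"
proof
  let ?w = "vs @ [hd vs]"
  let ?P = "take i ?w" and ?M = "drop (Suc i) (take j ?w)" and ?Q = "drop (Suc j) ?w"
  assume "{vs ! i, vs ! j} \<in> E"
  moreover have "?w ! i = vs ! i" "?w ! j = vs ! j"
    using assms(2,3) by (simp_all add: nth_append_left)
  ultimately have chord: "{?w ! i, ?w ! j} \<in> E"
    by simp
  have "i < j" "j < length ?w"
    using assms(2,3) by simp_all
  then have split: "?w = ?P @ [?w ! i] @ ?M @ [?w ! j] @ ?Q"
    by (rule split_at_two_nth)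
  have "negative_closed_walk V E s ?w"
    using assms(1) unfolding shortest_negative_closed_walk_def by blast
  then have "negative_closed_walk V E s (?P @ [?w ! i] @ ?M @ [?w ! j] @ ?Q)"
    by (subst (asm) split)
  moreover have "?M \<noteq> []" "2 \<le> length ?P + length ?Q"
    using assms(2-4) by simp_all
  ultimately have "\<exists>w'. negative_closed_walk V E s w' \<and> length w' < length (?P @ [?w ! i] @ ?M @ [?w ! j] @ ?Q)"
    by (rule ex_shorter_negative_closed_walk_chord[OF _ chord])
  then have "\<exists>w'. negative_closed_walk V E s w' \<and> length w' < length ?w"
    by (subst split)
  with shortest_negative_closed_walk_not_shorter[OF assms(1)] show False
    by blast
qed

lemma shortest_negative_closed_walk_non_neighbour:
  assumes "shortest_negative_closed_walk V E s w" "5 \<le> length w" "u \<in> V"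
  shows "\<exists>x \<in> set w. {u, x} \<notin> E"
proof (rule ccontr)
  assume "\<not> (\<exists>x \<in> set w. {u, x} \<notin> E)"
  then have hub: "\<forall>x \<in> set w. {u, x} \<in> E"
    by blast
  have "negative_closed_walk V E s w"
    using assms(1) unfolding shortest_negative_closed_walk_def by blast
  then have "\<exists>w'. negative_closed_walk V E s w' \<and> length w' < length w"
    using assms(3) hub assms(2) by (rule ex_shorter_negative_closed_walk_hub)
  then show False
    using shortest_negative_closed_walk_not_shorter[OF assms(1)] by blast
qed

section \<open>Counting non-edges\<close>

definition non_edges :: "'a set \<Rightarrow> 'a set set \<Rightarrow> 'a set set" where
  "non_edges V E = {e. e \<subseteq> V \<and> card e = 2 \<and> e \<notin> E}"

lemma finite_non_edges: "finite V \<Longrightarrow> finite (non_edges V E)"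
  unfolding non_edges_def by (rule finite_subset[of _ "Pow V"]) auto

lemma real_choose_two: "2 * real (n choose 2) = real n * (real n - 1)"
proof -
  have "even (n * (n - 1))"
    by (cases "even n") auto
  then have "2 * (n choose 2) = n * (n - 1)"
    by (metis choose_two dvd_mult_div_cancel)
  then have "2 * real (n choose 2) = real n * real (n - 1)"
    by (metis of_nat_mult of_nat_numeral)
  moreover have "real n * real (n - 1) = real n * (real n - 1)"
    by (cases n) simp_all
  ultimately show ?thesis
    by simp
qed

lemma card_edges_add_card_non_edges:
  assumes "finite V" "\<forall>e \<in> E. e \<subseteq> V \<and> card e = 2"
  shows "card E + card (non_edges V E) = card V choose 2"
proof -
  let ?T = "{e. e \<subseteq> V \<and> card e = 2}"
  have sub: "E \<subseteq> ?T"
    using assms(2) by auto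
  have "?T \<subseteq> Pow V"
    by auto
  then have fin: "finite ?T"
    by (rule finite_subset) (simp add: assms(1))
  have "non_edges V E = ?T - E"
    unfolding non_edges_def by auto
  then have "card (non_edges V E) = card ?T - card E"
    using card_Diff_subset[OF finite_subset[OF sub fin] sub] by simp
  moreover have "card E \<le> card ?T"
    using card_mono[OF fin sub] .
  moreover have "card ?T = card V choose 2"
    using n_subsets[OF assms(1)] .
  ultimately show ?thesis
    by linarith
qed

text \<open>Excluding 2-cycles of \<open>f\<close> makes the non-edges \<open>{u, f u}\<close> distinct.\<close>

lemma card_le_card_non_edges:
  assumes "finite V" "D \<subseteq> V"
    and "\<forall>u \<in> D. f u \<in> V \<and> f u \<noteq> u \<and> {u, f u} \<notin> E"
    and "\<forall>u \<in> D. f u \<in> D \<longrightarrow> f (f u) \<noteq> u"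
  shows "card D \<le> card (non_edges V E)"
proof (rule card_inj_on_le[where f = "\<lambda>u. {u, f u}"])
  show "inj_on (\<lambda>u. {u, f u}) D"
  proof (rule inj_onI)
    fix u v assume uv: "u \<in> D" "v \<in> D" "{u, f u} = {v, f v}"
    show "u = v"
    proof (rule ccontr)
      assume "u \<noteq> v"
      then have "u = f v" "f u = v"
        using uv(3) by (auto simp: doubleton_eq_iff)
      with uv(1,2) assms(4) show False
        by blast
    qed
  qed
  show "(\<lambda>u. {u, f u}) ` D \<subseteq> non_edges V E"
    using assms(2,3) unfolding non_edges_def by auto
  show "finite (non_edges V E)"
    using assms(1) by (rule finite_non_edges)
qed

lemma card_diff_le_card_non_edges:
  assumes "finite V" "W \<subseteq> V" "\<forall>u \<in> V - W. \<exists>x \<in> W. {u, x} \<notin> E"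
  shows "card (V - W) \<le> card (non_edges V E)"
proof -
  define f where "f u = (SOME x. x \<in> W \<and> {u, x} \<notin> E)" for u
  have f: "f u \<in> W \<and> {u, f u} \<notin> E" if "u \<in> V - W" for u
  proof -
    from assms(3) that obtain x where "x \<in> W \<and> {u, x} \<notin> E"
      by auto
    then show ?thesis
      unfolding f_def by (rule someI)
  qed
  show ?thesis
  proof (rule card_le_card_non_edges[OF assms(1)])
    show "\<forall>u \<in> V - W. f u \<in> V \<and> f u \<noteq> u \<and> {u, f u} \<notin> E"
    proof
      fix u assume "u \<in> V - W"
      with f[OF this] assms(2) show "f u \<in> V \<and> f u \<noteq> u \<and> {u, f u} \<notin> E"
        by auto
    qed
    show "\<forall>u \<in> V - W. f u \<in> V - W \<longrightarrow> f (f u) \<noteq> u"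
    proof (intro ballI impI)
      fix u assume "u \<in> V - W" "f u \<in> V - W"
      with f[OF this(1)] show "f (f u) \<noteq> u"
        by simp
    qed
  qed simp
qed

lemma card_non_edges_ge_if_chordless_cycle:
  assumes "finite V" "set vs \<subseteq> V" "distinct vs" "4 \<le> length vs"
    and "\<forall>j. 2 \<le> j \<and> j \<le> length vs - 2 \<longrightarrow> {vs ! 0, vs ! j} \<notin> E"
    and "{vs ! 1, vs ! (length vs - 1)} \<notin> E"
    and "\<forall>u \<in> V - set vs. \<exists>x \<in> set vs. {u, x} \<notin> E"
  shows "card V - 2 \<le> card (non_edges V E)"
proof -
  let ?k = "length vs" and ?D = "V - {vs ! 0, vs ! 1}"
  have nth_eq: "vs ! a = vs ! b \<longleftrightarrow> a = b" if "a < ?k" "b < ?k" for a b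
    using assms(3) that nth_eq_iff_index_eq by blast
  have k: "0 < ?k" "1 < ?k"
    using assms(4) by linarith+
  have in_vs: "vs ! 0 \<in> set vs" "vs ! 1 \<in> set vs"
    using k by simp_all
  define g where "g u = (SOME x. x \<in> set vs \<and> {u, x} \<notin> E)" for u
  have g: "g u \<in> set vs \<and> {u, g u} \<notin> E" if "u \<in> V - set vs" for u
  proof -
    from assms(7) that obtain x where "x \<in> set vs \<and> {u, x} \<notin> E"
      by auto
    then show ?thesis
      unfolding g_def by (rule someI)
  qed
  define f where "f u = (if u \<notin> set vs then g u else if u = vs ! (?k - 1) then vs ! 1 else vs ! 0)"
    for u
  have f: "f u \<in> set vs \<and> f u \<noteq> u \<and> {u, f u} \<notin> E \<and> (u \<in> set vs \<longrightarrow> f u \<notin> ?D)"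
    if u: "u \<in> ?D" for u
  proof (cases "u \<in> set vs")
    case True
    then obtain j where j: "j < ?k" "u = vs ! j"
      by (metis in_set_conv_nth)
    with u have "j \<noteq> 0" "j \<noteq> 1"
      by (metis DiffD2 insertCI)+
    show ?thesis
    proof (cases "j = ?k - 1")
      case True
      then show ?thesis
        using assms(6) j \<open>j \<noteq> 1\<close> in_vs nth_eq[of 1 j] k unfolding f_def
        by (auto simp: insert_commute)
    next
      case False
      with j have "u \<noteq> vs ! (?k - 1)"
        using nth_eq k by simp
      moreover have "{vs ! 0, vs ! j} \<notin> E"
        using assms(5) j \<open>j \<noteq> 0\<close> \<open>j \<noteq> 1\<close> False by simp
      ultimately show ?thesis
        using \<open>u \<in> set vs\<close> j \<open>j \<noteq> 0\<close> in_vs nth_eq[of 0 j] k unfolding f_def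
        by (auto simp: insert_commute)
    qed
  next
    case False
    with u have "g u \<in> set vs \<and> {u, g u} \<notin> E"
      by (intro g) simp
    with False show ?thesis
      unfolding f_def by auto
  qed
  have "card ?D \<le> card (non_edges V E)"
  proof (rule card_le_card_non_edges[OF assms(1)])
    show "\<forall>u \<in> ?D. f u \<in> V \<and> f u \<noteq> u \<and> {u, f u} \<notin> E"
      using f assms(2) by auto
    show "\<forall>u \<in> ?D. f u \<in> ?D \<longrightarrow> f (f u) \<noteq> u"
    proof (intro ballI impI)
      fix u assume "u \<in> ?D" "f u \<in> ?D"
      with f have "u \<notin> set vs" "f (f u) \<in> set vs"
        by auto
      then show "f (f u) \<noteq> u"
        by auto
    qed
  qed auto
  moreover have "card {vs ! 0, vs ! 1} = 2"
    using nth_eq[of 0 1] k by simp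
  moreover have "card ?D = card V - card {vs ! 0, vs ! 1}"
    using in_vs assms(1,2) by (intro card_Diff_subset) auto
  ultimately show ?thesis
    by simp
qed

lemma card_non_edges_ge_if_long_shortest_negative_closed_walk:
  assumes "finite V" "shortest_negative_closed_walk V E s w" "5 \<le> length w"
  shows "card V - 2 \<le> card (non_edges V E)"
proof -
  obtain vs where w: "w = vs @ [hd vs]" and "distinct vs"
    using shortest_negative_closed_walk_cycle[OF assms(2)] by blast
  with assms(3) have len: "4 \<le> length vs"
    by simp
  with w have set_w: "set w = set vs"
    by (cases vs) auto
  have chord: "{vs ! i, vs ! j} \<notin> E"
    if "Suc i < j" "j < length vs" "2 \<le> i + (length vs - j)" for i j
    using assms(2) that unfolding w by (rule shortest_negative_closed_walk_no_chord)
  show ?thesis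
  proof (rule card_non_edges_ge_if_chordless_cycle[OF assms(1) _ \<open>distinct vs\<close> len])
    show "set vs \<subseteq> V"
      using assms(2) set_w unfolding shortest_negative_closed_walk_def negative_closed_walk_def
      by simp
    show "\<forall>j. 2 \<le> j \<and> j \<le> length vs - 2 \<longrightarrow> {vs ! 0, vs ! j} \<notin> E"
    proof (intro allI impI)
      fix j assume "2 \<le> j \<and> j \<le> length vs - 2"
      with len show "{vs ! 0, vs ! j} \<notin> E"
        by (intro chord) linarith+
    qed
    show "{vs ! 1, vs ! (length vs - 1)} \<notin> E"
      using len by (intro chord) linarith+
    show "\<forall>u \<in> V - set vs. \<exists>x \<in> set vs. {u, x} \<notin> E"
      using shortest_negative_closed_walk_non_neighbour[OF assms(2,3)] set_w by simp
  qed
qed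

section \<open>Negative triangles and cliques\<close>

definition clique :: "'a set set \<Rightarrow> 'a set \<Rightarrow> bool" where
  "clique E K \<longleftrightarrow> (\<forall>x \<in> K. \<forall>y \<in> K. x \<noteq> y \<longrightarrow> {x, y} \<in> E)"

lemma ex_maximal_clique:
  assumes "finite V" "K \<subseteq> V" "clique E K"
  obtains W where "K \<subseteq> W" "W \<subseteq> V" "clique E W" "\<forall>u \<in> V - W. \<exists>x \<in> W. {u, x} \<notin> E"
proof -
  define P where "P W \<longleftrightarrow> K \<subseteq> W \<and> W \<subseteq> V \<and> clique E W" for W
  have "P K"
    using assms(2,3) unfolding P_def by simp
  moreover have "\<forall>W. P W \<longrightarrow> card W < card V + 1"
    using assms(1) unfolding P_def by (simp add: card_mono le_imp_less_Suc)
  ultimately obtain W where W: "P W" and max: "\<forall>W'. P W' \<longrightarrow> card W' \<le> card W"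
    using ex_has_greatest_nat[of P K card "card V + 1"] by blast
  have "\<exists>x \<in> W. {u, x} \<notin> E" if u: "u \<in> V - W" for u
  proof (rule ccontr)
    assume "\<not> (\<exists>x \<in> W. {u, x} \<notin> E)"
    with u W have "P (insert u W)"
      unfolding P_def clique_def by (auto simp: insert_commute)
    then have "card (insert u W) \<le> card W"
      using max by blast
    moreover have "finite W"
      using W assms(1) finite_subset unfolding P_def by blast
    ultimately show False
      using u by simp
  qed
  with W show thesis
    using that unfolding P_def by blast
qed

lemma not_balanced_if_negative_triangle:
  assumes "negative_closed_walk V E s [a, b, c, a]" "distinct [a, b, c]" "{a, b, c} \<subseteq> S"
  shows "\<not> balanced S {e \<in> E. e \<subseteq> S} s"
proof -
  have "is_walk {e \<in> E. e \<subseteq> S} ([a, b, c] @ [hd [a, b, c]])"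
    using assms(1,3) unfolding negative_closed_walk_def by simp
  then have "is_cycle S {e \<in> E. e \<subseteq> S} [a, b, c]"
    using assms(2,3) unfolding is_cycle_def is_walk_closed_iff[of "[a, b, c]", OF list.simps(3)]
    by simp
  moreover have "\<not> positive_cycle s [a, b, c]"
    using assms(1) card_neg_cycle_edges[OF assms(2), of s]
    unfolding positive_cycle_def negative_closed_walk_def by simp
  ultimately show ?thesis
    unfolding balanced_def by blast
qed

lemma card_non_edges_ge_if_negative_triangle:
  assumes "finite V" "\<forall>e \<in> E. card e = 2" "unbalanced_Kk_free (r + 1) V E s" "2 \<le> r"
    and "negative_closed_walk V E s [a, b, c, a]"
  shows "card V - r \<le> card (non_edges V E)"
proof -
  let ?T = "{a, b, c}"
  have edges: "{a, b} \<in> E" "{b, c} \<in> E" "{c, a} \<in> E" and "?T \<subseteq> V"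
    using assms(5) unfolding negative_closed_walk_def by auto
  have "x \<noteq> y" if "{x, y} \<in> E" for x y
    using assms(2) that by fastforce
  with edges have "distinct [a, b, c]"
    by auto
  with edges have "clique E ?T"
    unfolding clique_def by (auto simp: insert_commute)
  then obtain W where W: "?T \<subseteq> W" "W \<subseteq> V" "clique E W" "\<forall>u \<in> V - W. \<exists>x \<in> W. {u, x} \<notin> E"
    using ex_maximal_clique[OF assms(1) \<open>?T \<subseteq> V\<close>] by blast
  have "card W \<le> r"
  proof (rule ccontr)
    assume "\<not> card W \<le> r"
    moreover have "card ?T = 3"
      using \<open>distinct [a, b, c]\<close> by simp
    moreover have "finite W"
      using W(2) assms(1) by (rule finite_subset)
    ultimately have "r - 2 \<le> card (W - ?T)"
      using card_Diff_subset[OF _ W(1)] by simp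
    then obtain U where U: "U \<subseteq> W - ?T" "card U = r - 2" "finite U"
      by (rule obtain_subset_with_card_n)
    let ?S = "?T \<union> U"
    have "card ?S = r + 1"
      using card_Un_disjoint[of ?T U] U \<open>card ?T = 3\<close> assms(4) by auto
    moreover have "?S \<subseteq> V" "\<forall>x \<in> ?S. \<forall>y \<in> ?S. x \<noteq> y \<longrightarrow> {x, y} \<in> E"
      using U W unfolding clique_def by blast+
    moreover have "\<not> balanced ?S {e \<in> E. e \<subseteq> ?S} s"
      using not_balanced_if_negative_triangle[OF assms(5) \<open>distinct [a, b, c]\<close>] by simp
    ultimately show False
      using assms(3) unfolding unbalanced_Kk_free_def by blast
  qed
  moreover have "card (V - W) = card V - card W"
    using W(2) assms(1) by (simp add: card_Diff_subset finite_subset)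
  ultimately show ?thesis
    using card_diff_le_card_non_edges[OF assms(1) W(2,4)] by linarith
qed

lemma card_non_edges_ge_if_shortest_negative_closed_walk:
  assumes "finite V" "\<forall>e \<in> E. card e = 2" "unbalanced_Kk_free (r + 1) V E s" "2 \<le> r"
    and "shortest_negative_closed_walk V E s w"
  shows "card V - r \<le> card (non_edges V E)"
proof -
  have neg: "negative_closed_walk V E s w"
    using assms(5) unfolding shortest_negative_closed_walk_def by blast
  show ?thesis
  proof (cases "length w = 4")
    case True
    then obtain a b c d where w: "w = [a, b, c, d]"
      by (auto simp: length_Suc_conv numeral_eq_Suc)
    moreover from neg w have "d = a"
      unfolding negative_closed_walk_def by simp
    ultimately have "negative_closed_walk V E s [a, b, c, a]"
      using neg by simp
    then show ?thesis
      by (rule card_non_edges_ge_if_negative_triangle[OF assms(1-4)])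
  next
    case False
    with negative_closed_walk_length_ge[OF neg assms(2)] have "5 \<le> length w"
      by simp
    with assms(4) show ?thesis
      using card_non_edges_ge_if_long_shortest_negative_closed_walk[OF assms(1,5)] by simp
  qed
qed

theorem theorem1p7:
  fixes V :: "'a set" and E :: "'a set set" and sigma :: "'a set \<Rightarrow> int" and r n :: nat
  assumes "r \<ge> 2" and "n \<ge> 1"
    and "signed_graph V E sigma" and "card V = n"
    and "\<not> balanced V E sigma"
    and "unbalanced_Kk_free (r + 1) V E sigma"
  shows "real (card E) \<le> real n * (real n - 1) / 2 - (real n - real r)"
proof -
  have fin: "finite V" and edges: "\<forall>e \<in> E. e \<subseteq> V \<and> card e = 2"
    using assms(3) unfolding signed_graph_def by auto
  obtain vs where "is_cycle V E vs" "\<not> positive_cycle sigma vs"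
    using assms(5) unfolding balanced_def by blast
  then have "negative_closed_walk V E sigma (vs @ [hd vs])"
    by (rule negative_closed_walk_of_cycle)
  then obtain w where "shortest_negative_closed_walk V E sigma w"
    using ex_shortest_negative_closed_walk by blast
  then have "n - r \<le> card (non_edges V E)"
    using card_non_edges_ge_if_shortest_negative_closed_walk[OF fin _ assms(6,1)] edges assms(4)
    by simp
  then have "real n - real r \<le> real (card (non_edges V E))"
    by linarith
  then show ?thesis
    using card_edges_add_card_non_edges[OF fin edges] real_choose_two[of n] assms(4)
    by (simp flip: of_nat_add)
qed

end
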